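(* Let $n,t\ge 0$ be integers with $n\ge 3t+1$, let $k=\lfloor t/5\rfloor+1$, and let $\mathcal P=[1:n-t]$. Let $E:\mathcal P\times\mathcal P\to\{0,1\}$ be symmetric ($E_{i,j}=E_{j,i}$; loops $E_{i,i}=1$ are allowed and count as edges). Let $i^\star\in\mathcal P$ and suppose there is a set $\mathcal C\subseteq\mathcal P\setminus\{i^\star\}$ such that $E_{i,i^\star}=1$ for all $i\in\mathcal C$, $\sum_{j\in\mathcal P}E_{i,j}\ge n-2t$ for all $i\in\mathcal C$, and $|\mathcal C|\ge n-2t-1$. Let $\mathcal D=\{i\in\mathcal P\setminus\{i^\star\}: \sum_{j\in\mathcal C}E_{i,j}\ge k\}$. Then $|\mathcal D|\ge n-9t/4-1$. *)

theory Defs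
  imports Complex_Main
begin

end

theory Submission
  imports Defs
begin

text \<open>Count the edges between \<open>C\<close> and \<open>P = [1:n-t] - {i*}\<close> in two ways. Every vertex of \<open>C\<close>
  keeps at least \<open>a = n - 2t - 1\<close> neighbours in \<open>P\<close> after losing its edge to \<open>i*\<close>, so there
  are at least \<open>|C| a\<close> such edges. A vertex of \<open>D\<close> sends at most \<open>|C|\<close> edges into \<open>C\<close> and every
  other vertex of \<open>P\<close> at most \<open>k - 1 = \<lfloor>t/5\<rfloor>\<close>. Since \<open>|P| = a + t\<close> and \<open>|C| \<ge> a\<close>, comparing
  the two counts forces \<open>|D| \<ge> a - t/4\<close>.\<close>

lemma sum_degrees_le_threshold_split:
  fixes E :: "'a \<Rightarrow> 'a \<Rightarrow> nat" and K :: nat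
  assumes "finite P" "C \<subseteq> P"
    and E_le_1: "\<And>i j. i \<in> P \<Longrightarrow> j \<in> P \<Longrightarrow> E i j \<le> 1"
    and E_sym: "\<And>i j. i \<in> P \<Longrightarrow> j \<in> P \<Longrightarrow> E i j = E j i"
  defines "D \<equiv> {i \<in> P. K < (\<Sum>j\<in>C. E i j)}"
  shows "(\<Sum>i\<in>C. \<Sum>j\<in>P. E i j) \<le> card D * card C + card (P - D) * K"
proof -
  have "(\<Sum>i\<in>C. \<Sum>j\<in>P. E i j) = (\<Sum>j\<in>P. \<Sum>i\<in>C. E j i)"
    using assms(2) by (subst sum.swap) (intro sum.cong refl; auto intro: E_sym)
  also have "\<dots> = (\<Sum>j\<in>D. \<Sum>i\<in>C. E j i) + (\<Sum>j\<in>P - D. \<Sum>i\<in>C. E j i)"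
    using \<open>finite P\<close> by (subst sum.subset_diff[of D P]) (auto simp: D_def)
  also have "(\<Sum>j\<in>D. \<Sum>i\<in>C. E j i) \<le> (\<Sum>j\<in>D. \<Sum>i\<in>C. 1)"
    using assms(2) E_le_1 by (intro sum_mono) (fastforce simp: D_def)
  also have "(\<Sum>j\<in>P - D. \<Sum>i\<in>C. E j i) \<le> (\<Sum>j\<in>P - D. K)"
    by (intro sum_mono) (auto simp: D_def)
  finally show ?thesis by simp
qed

lemma double_count_imp_ge_sub_quarter:
  fixes a d m t K :: real
  assumes "0 \<le> K" "5 * K \<le> t" "t \<le> a" "0 \<le> d" "a \<le> m"
    and double_count: "m * a \<le> d * m + (a + t - d) * K"
  shows "a - t / 4 \<le> d"
proof (rule ccontr)
  assume "\<not> ?thesis"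
  then have deficit: "t / 4 < a - d" by simp
  have "a * (a - d) \<le> m * (a - d)"
    using deficit assms by (intro mult_right_mono) auto
  also have "\<dots> \<le> (a - d + t) * K"
    using double_count by (simp add: algebra_simps)
  finally have key: "(a - d) * (a - K) \<le> t * K"
    by (simp add: algebra_simps)
  show False
  proof (cases "K = 0")
    case True
    have "0 < (a - d) * a"
      using deficit assms by (intro mult_pos_pos) auto
    with key True show False by simp
  next
    case False
    have "t * K < (a - d) * (4 * K)"
      using mult_strict_right_mono[of t "4 * (a - d)" K] deficit False assms(1)
      by (simp add: algebra_simps)
    also have "\<dots> \<le> (a - d) * (a - K)"
      using deficit assms by (intro mult_left_mono) auto
    finally show False using key by simp
  qed
qed

theorem lemma8:
  fixes n t :: nat and E :: "nat \<Rightarrow> nat \<Rightarrow> nat" and istar :: nat and C :: "nat set"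
  assumes hn: "n \<ge> 3 * t + 1"
    and E01: "\<And>i j. i \<in> {1..n - t} \<Longrightarrow> j \<in> {1..n - t} \<Longrightarrow> E i j \<in> {0, 1}"
    and Esym: "\<And>i j. i \<in> {1..n - t} \<Longrightarrow> j \<in> {1..n - t} \<Longrightarrow> E i j = E j i"
    and istar: "istar \<in> {1..n - t}"
    and Csub: "C \<subseteq> {1..n - t} - {istar}"
    and Cadj: "\<And>i. i \<in> C \<Longrightarrow> E i istar = 1"
    and Cdeg: "\<And>i. i \<in> C \<Longrightarrow> (\<Sum>j\<in>{1..n - t}. E i j) \<ge> n - 2 * t"
    and Ccard: "card C \<ge> n - 2 * t - 1"
  shows "real (card {i \<in> {1..n - t} - {istar}. (\<Sum>j\<in>C. E i j) \<ge> t div 5 + 1})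
           \<ge> real n - 9 * real t / 4 - 1"
proof -
  define P where "P = {1..n - t} - {istar}"
  define D where "D = {i \<in> P. t div 5 < (\<Sum>j\<in>C. E i j)}"
  have "finite P" and "D \<subseteq> P" and "card P = n - t - 1"
    using istar by (auto simp: P_def D_def)
  have "C \<subseteq> P" using Csub by (simp add: P_def)
  have E_le_1: "E i j \<le> 1" if "i \<in> P" "j \<in> P" for i j
    using E01[of i j] that by (auto simp: P_def)
  have "n - 2 * t - 1 \<le> (\<Sum>j\<in>P. E i j)" if "i \<in> C" for i
    using Cdeg[OF that] Cadj[OF that] sum.remove[OF finite_atLeastAtMost istar, of "E i"]
    by (simp add: P_def)
  then have "card C * (n - 2 * t - 1) \<le> (\<Sum>i\<in>C. \<Sum>j\<in>P. E i j)"
    using sum_mono[of C "\<lambda>_. n - 2 * t - 1"] by simp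
  also have "\<dots> \<le> card D * card C + card (P - D) * (t div 5)"
    using \<open>finite P\<close> \<open>C \<subseteq> P\<close> E_le_1 Esym unfolding D_def
    by (intro sum_degrees_le_threshold_split) (auto simp: P_def)
  finally have "real (card C) * real (n - 2 * t - 1)
      \<le> real (card D) * real (card C) + real (card (P - D)) * real (t div 5)"
    by (metis of_nat_le_iff of_nat_mult of_nat_add)
  moreover have "real (card (P - D)) = real (n - 2 * t - 1) + real t - real (card D)"
    using \<open>D \<subseteq> P\<close> \<open>finite P\<close> \<open>card P = n - t - 1\<close> card_mono[of P D] hn
    by (simp add: card_Diff_subset finite_subset of_nat_diff)
  ultimately have "real (n - 2 * t - 1) - real t / 4 \<le> real (card D)"
    using hn Ccard
    by (intro double_count_imp_ge_sub_quarter[where m = "real (card C)" and K = "real (t div 5)"])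
      auto
  moreover have "D = {i \<in> {1..n - t} - {istar}. (\<Sum>j\<in>C. E i j) \<ge> t div 5 + 1}"
    by (auto simp: D_def P_def)
  ultimately show ?thesis using hn by simp
qed

end
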